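(* For every infinite binary sequence $\rho=\rho_0\rho_1\rho_2\cdots\in\mathcal{L}$, regarding $\rho$ as the real number in $[0,1]$ whose binary expansion is $0.\rho_0\rho_1\rho_2\ldots$ (the blocks concatenated), the sequence $(\{2^n\rho\})_{n\ge 1}$ of fractional parts does not have Poissonian pair correlations.
   Context: Work over the field $\mathbb{F}_2$; binary words are identified with vectors over $\mathbb{F}_2$, with coordinates indexed $1,\dots,e$. Define matrices $M_0=(1)$ and $M_{d+1}=\begin{pmatrix} M_d & M_d\\ 0 & M_d\end{pmatrix}$, so $M_d\in\mathbb{F}_2^{e\times e}$ with $e=2^d$. Let $w_0,\dots,w_{2^e-1}$ be all vectors of $\mathbb{F}_2^e$ in increasing lexicographic order ($w_n$ is the $e$-bit binary representation of $n$, most significant bit first). Let $\sigma$ be the rotation $\sigma(a_1\cdots a_n)=a_na_1\cdots a_{n-1}$. A tuple $\nu=(n_1,\dots,n_e)$ of non-negative integers is suitable if $n_e=0$ and $n_{i+1}\le n_i\le n_{i+1}+1$ for $1\le i\le e-1$. If $C_1,\dots,C_e$ are the columns of $M_d$, set $M_d^\nu=(\sigma^{n_1}(C_1),\dots,\sigma^{n_e}(C_e))$. A word is an $e$-affine necklace if it equals the concatenation $(Mw_0')(Mw_1')\cdots(Mw_{2^e-1}')$ for some $z\in\mathbb{F}_2^e$ and some suitable tuple $\nu$, where $M=M_d^\nu$ and $w_i'=w_i+z$. $\mathcal{L}$ is the set of infinite binary words $\rho_0\rho_1\rho_2\cdots$ where each $\rho_d$ is a $2^d$-affine necklace. For real $x$,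 $\{x\}=x-\lfloor x\rfloor$ and $\Vert x\Vert$ is the distance from $x$ to the nearest integer. A sequence $(x_n)_{n\ge1}$ in $[0,1)$ has Poissonian pair correlations if for every real $s\ge 0$, $\lim_{N\to\infty}F_N(s)=2s$, where $F_N(s)=\frac1N\#\{(i,j):1\le i\ne j\le N,\ \Vert x_i-x_j\Vert<s/N\}$. *)

theory Defs
  imports Complex_Main
begin

text \<open>All indices are 0-based: a coordinate i in 1..e of the paper is i+1 here.
  Elements of F_2 are booleans (True = 1), addition is exclusive or.\<close>

fun Mmat :: "nat \<Rightarrow> nat \<Rightarrow> nat \<Rightarrow> bool" where
  "Mmat 0 i j = True"
| "Mmat (Suc d) i j =
     (if i < 2^d then (if j < 2^d then Mmat d i j else Mmat d i (j - 2^d))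
      else (if j < 2^d then False else Mmat d (i - 2^d) (j - 2^d)))"

definition suitable :: "nat \<Rightarrow> (nat \<Rightarrow> nat) \<Rightarrow> bool" where
  "suitable e nu \<longleftrightarrow> nu (e - 1) = 0 \<and>
     (\<forall>i. i + 1 < e \<longrightarrow> nu (i + 1) \<le> nu i \<and> nu i \<le> nu (i + 1) + 1)"

text \<open>Rotation sigma(a_1...a_n) = a_n a_1 ... a_{n-1}; entry i of sigma^k(C) is
  entry (i - k) mod e of C.\<close>
definition rot_col :: "nat \<Rightarrow> nat \<Rightarrow> (nat \<Rightarrow> bool) \<Rightarrow> nat \<Rightarrow> bool" where
  "rot_col e k C i = C ((i + e - k mod e) mod e)"

definition Mnu :: "nat \<Rightarrow> (nat \<Rightarrow> nat) \<Rightarrow> nat \<Rightarrow> nat \<Rightarrow> bool" where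
  "Mnu d nu i j = rot_col (2^d) (nu j) (\<lambda>r. Mmat d r j) i"

definition matvec :: "nat \<Rightarrow> (nat \<Rightarrow> nat \<Rightarrow> bool) \<Rightarrow> (nat \<Rightarrow> bool) \<Rightarrow> nat \<Rightarrow> bool" where
  "matvec e M v i = odd (card {j. j < e \<and> M i j \<and> v j})"

definition wvec :: "nat \<Rightarrow> nat \<Rightarrow> nat \<Rightarrow> bool" where
  "wvec e n i = odd (n div 2 ^ (e - 1 - i))"

definition necklace_word :: "nat \<Rightarrow> (nat \<Rightarrow> nat) \<Rightarrow> (nat \<Rightarrow> bool) \<Rightarrow> bool list" where
  "necklace_word d nu z =
     concat (map (\<lambda>n. map (\<lambda>i. matvec (2^d) (Mnu d nu) (\<lambda>k. wvec (2^d) n k \<noteq> z k) i)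
                            [0..<2^d])
                 [0..<2^(2^d)])"

definition affine_necklace :: "nat \<Rightarrow> bool list \<Rightarrow> bool" where
  "affine_necklace d w \<longleftrightarrow>
     (\<exists>nu z. suitable (2^d) nu \<and> w = necklace_word d nu z)"

definition in_L :: "(nat \<Rightarrow> bool) \<Rightarrow> bool" where
  "in_L \<rho> \<longleftrightarrow> (\<exists>\<rho>s :: nat \<Rightarrow> bool list.
      (\<forall>d. affine_necklace d (\<rho>s d)) \<and>
      (\<forall>d i. i < length (\<rho>s d) \<longrightarrow> \<rho> ((\<Sum>j<d. length (\<rho>s j)) + i) = \<rho>s d ! i))"

definition word_real :: "(nat \<Rightarrow> bool) \<Rightarrow> real" where
  "word_real \<rho> = (\<Sum>k. (if \<rho> k then 1 else 0) / 2 ^ (k + 1))"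

definition dist_int :: "real \<Rightarrow> real" where
  "dist_int x = min (frac x) (1 - frac x)"

definition FN :: "(nat \<Rightarrow> real) \<Rightarrow> nat \<Rightarrow> real \<Rightarrow> real" where
  "FN x N s = card {(i, j). i \<in> {1..N} \<and> j \<in> {1..N} \<and> i \<noteq> j \<and>
                            dist_int (x i - x j) < s / N} / N"

definition poissonian_pc :: "(nat \<Rightarrow> real) \<Rightarrow> bool" where
  "poissonian_pc x \<longleftrightarrow> (\<forall>s::real. s \<ge> 0 \<longrightarrow> (\<lambda>N. FN x N s) \<longlonglongrightarrow> 2 * s)"

end

theory Submission
  imports Defs
begin

text \<open>Write \<open>e = 2^d\<close>, \<open>M = M_d^\<nu>\<close>, and let \<open>S\<close> and \<open>N\<close> be the positions where \<open>\<rho>_d\<close>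
  starts and ends. Inside \<open>\<rho>_d\<close> the blocks \<open>B_i = M (w_i + z)\<close> have length \<open>e\<close>. For even \<open>i\<close>,
  \<open>w_{i+1} - w_i\<close> is the last unit vector and the last column of \<open>M\<close> is all ones, so \<open>B_{i+1}\<close>
  is the complement of \<open>B_i\<close>; hence the \<open>e\<close> bits starting one place into \<open>B_i\<close> spell \<open>T B_i\<close>,
  the left rotation of \<open>B_i\<close> with its last bit flipped. If \<open>T B_i = B_j\<close> with \<open>j\<close> even, the
  binary expansions of \<open>2^n \<rho>\<close> at \<open>n = S + i e + t\<close> and \<open>n = S + j e + t - 1\<close> agree in
  \<open>e + d + 6\<close> digits for \<open>1 \<le> t \<le> e - d - 6\<close>, so these points are much closer than \<open>1/N\<close>.

  \<open>M\<close> is invertible over \<open>F_2\<close> for every \<open>\<nu>\<close>. The last coordinate \<open>\<lambda> u\<close> of \<open>M\<^sup>-\<^sup>1 u\<close> reads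
  off the parity of \<open>i\<close> from \<open>B_i\<close> and is not invariant under rotation, so the four classes of
  \<open>(\<lambda> u, \<lambda> (rotation u))\<close> have equal size, and one of them consists of blocks \<open>B_i\<close> with \<open>i\<close> even
  and \<open>T B_i\<close> an even block. This gives at least \<open>(3/16) N\<close> ordered pairs among the first \<open>N\<close>
  points at distance \<open>< (1/16)/N\<close>, whereas Poissonian pair correlations predict \<open>(1/8) N\<close>.\<close>

section \<open>Parity over \<open>F_2\<close>\<close>

definition parity :: "nat \<Rightarrow> (nat \<Rightarrow> bool) \<Rightarrow> bool" where
  "parity n P \<longleftrightarrow> odd (card {j. j < n \<and> P j})"

lemma parity_0 [simp]: "\<not> parity 0 P"
  by (simp add: parity_def)

lemma parity_Suc: "parity (Suc n) P = (parity n P \<noteq> P n)"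
proof -
  have "{j. j < Suc n \<and> P j} = (if P n then insert n {j. j < n \<and> P j} else {j. j < n \<and> P j})"
    by (auto simp: less_Suc_eq)
  then show ?thesis
    by (auto simp: parity_def)
qed

lemma parity_add: "parity (m + n) P = (parity m P \<noteq> parity n (\<lambda>j. P (j + m)))"
  by (induction n) (auto simp: parity_Suc add.commute)

lemma parity_double: "parity (2 * n) P = (parity n P \<noteq> parity n (\<lambda>j. P (j + n)))"
  using parity_add[of n n P] by (simp add: mult_2)

lemma parity_xor: "parity n (\<lambda>j. P j \<noteq> Q j) = (parity n P \<noteq> parity n Q)"
  by (induction n) (auto simp: parity_Suc)

lemma parity_cong: "(\<And>j. j < n \<Longrightarrow> P j = Q j) \<Longrightarrow> parity n P = parity n Q"
  unfolding parity_def by (rule arg_cong[where f = "\<lambda>S. odd (card S)"]) auto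

lemma parity_const [simp]: "parity n (\<lambda>_. c) = (odd n \<and> c)"
  by (induction n) (auto simp: parity_Suc)

lemma parity_single: "k < n \<Longrightarrow> parity n (\<lambda>j. j = k \<and> P j) = P k"
proof -
  assume "k < n"
  then have "{j. j < n \<and> j = k \<and> P j} = (if P k then {k} else {})"
    by auto
  then show ?thesis
    by (simp add: parity_def)
qed

section \<open>Invertibility of \<open>M_d^\<nu>\<close>\<close>

definition rot_index :: "nat \<Rightarrow> nat \<Rightarrow> nat \<Rightarrow> nat" where
  "rot_index E a q = (q + E - a mod E) mod E"

lemma Mnu_eq: "Mnu d \<nu> q j = Mmat d (rot_index (2^d) (\<nu> j) q) j"
  by (simp add: Mnu_def rot_col_def rot_index_def)

lemma int_rot_index: "0 < E \<Longrightarrow> int (rot_index E a q) = (int q - int a) mod int E"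
proof -
  assume "0 < E"
  then have "a mod E \<le> q + E"
    by (meson le_add2 less_imp_le_nat mod_less_divisor order.trans)
  then have "int (rot_index E a q) = (int q + int E - int a mod int E) mod int E"
    by (simp add: rot_index_def of_nat_diff zmod_int)
  also have "\<dots> = (int q - int a + int E) mod int E"
    by (simp add: mod_diff_right_eq algebra_simps)
  also have "\<dots> = (int q - int a) mod int E"
    by simp
  finally show ?thesis .
qed

lemma rot_index_less: "0 < E \<Longrightarrow> rot_index E a q < E"
  by (simp add: rot_index_def)

lemma rot_index_mod_half:
  assumes "0 < e"
  shows "rot_index (2 * e) a q mod e = rot_index e a q"
proof -
  have "int (rot_index (2 * e) a q mod e) = ((int q - int a) mod (2 * int e)) mod int e"
    using assms by (simp add: zmod_int int_rot_index)
  also have "\<dots> = int (rot_index e a q)"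
    using assms by (simp add: int_rot_index mod_mod_cancel)
  finally show ?thesis
    by simp
qed

lemma rot_index_add_half:
  assumes "0 < e"
  shows "rot_index (2 * e) a (q + e) = (rot_index (2 * e) a q + e) mod (2 * e)"
proof -
  have "int (rot_index (2 * e) a (q + e)) = ((int q - int a) + int e) mod (2 * int e)"
    using assms by (simp add: int_rot_index algebra_simps)
  also have "\<dots> = ((int q - int a) mod (2 * int e) + int e) mod (2 * int e)"
    by (simp add: mod_add_left_eq)
  also have "\<dots> = int ((rot_index (2 * e) a q + e) mod (2 * e))"
    using assms by (simp add: int_rot_index zmod_int)
  finally show ?thesis
    by simp
qed

lemma rot_index_add_period:
  assumes "0 < e"
  shows "rot_index e a (q + e) = rot_index e a q"
proof -
  have "int (rot_index e a (q + e)) = ((int q - int a) + int e) mod int e"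
    using assms by (simp add: int_rot_index algebra_simps)
  also have "\<dots> = int (rot_index e a q)"
    using assms by (simp add: int_rot_index)
  finally show ?thesis
    by simp
qed

lemma Mmat_last_column: "Mmat d r (2^d - 1)"
proof (induction d arbitrary: r)
  case (Suc d)
  have "2^Suc d - 1 - 2^d = (2::nat)^d - 1" and "\<not> 2^Suc d - 1 < (2::nat)^d"
    by simp_all
  then show ?case
    using Suc by (simp del: power_Suc)
qed simp

lemma Mmat_Suc_high:
  assumes "j < 2^d" "r < 2 * 2^d"
  shows "Mmat (Suc d) r (j + 2^d) = Mmat d (r mod 2^d) j"
  using assms by (cases "r < 2^d") (simp_all add: le_mod_geq)

lemma Mmat_Suc_low_pair:
  assumes "j < 2^d" "r < 2 * 2^d"
  shows "(Mmat (Suc d) r j \<noteq> Mmat (Suc d) ((r + 2^d) mod (2 * 2^d)) j) = Mmat d (r mod 2^d) j"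
proof (cases "r < 2^d")
  case False
  then have "(r + 2^d) mod (2 * 2^d) = r - 2^d" "r mod 2^d = r - 2^d" "r - 2^d < 2^d"
    using assms(2) by (simp_all add: le_mod_geq)
  then show ?thesis
    using False assms by simp
next
  case True
  then have "(r + 2^d) mod (2 * 2^d) = r + 2^d" "\<not> r + 2^d < 2^d"
    by simp_all
  then show ?thesis
    using True assms(1) by simp
qed

declare Mmat.simps(2) [simp del]

lemma Mnu_Suc_high:
  assumes "j < 2^d"
  shows "Mnu (Suc d) \<nu> q (j + 2^d) = Mnu d (\<lambda>j. \<nu> (j + 2^d)) q j"
  using Mmat_Suc_high[OF assms rot_index_less[of "2 * 2^d"]]
  by (simp add: Mnu_eq rot_index_mod_half)

lemma Mnu_add_period: "Mnu d \<nu> (q + 2^d) j = Mnu d \<nu> q j"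
  by (simp add: Mnu_eq rot_index_add_period)

lemma Mnu_Suc_low_pair:
  assumes "j < 2^d"
  shows "(Mnu (Suc d) \<nu> q j \<noteq> Mnu (Suc d) \<nu> (q + 2^d) j) = Mnu d \<nu> q j"
  using Mmat_Suc_low_pair[OF assms rot_index_less[of "2 * 2^d"]]
  by (simp add: Mnu_eq rot_index_mod_half rot_index_add_half)

text \<open>Adding rows \<open>q\<close> and \<open>q + 2^d\<close> of \<open>M_{d+1}^\<nu>\<close> cancels the right half of the columns and leaves
  row \<open>q\<close> of \<open>M_d^\<nu>\<close> on the left half.\<close>
lemma Mnu_Suc_kernel_left:
  assumes "\<forall>q<2 * 2^d. \<not> parity (2 * 2^d) (\<lambda>j. Mnu (Suc d) \<nu> q j \<and> v j)" and "q < 2^d"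
  shows "\<not> parity (2^d) (\<lambda>j. Mnu d \<nu> q j \<and> v j)"
proof -
  let ?P = "\<lambda>j. (Mnu (Suc d) \<nu> q j \<and> v j) \<noteq> (Mnu (Suc d) \<nu> (q + 2^d) j \<and> v j)"
  have "\<not> parity (2 * 2^d) ?P"
    using assms unfolding parity_xor by simp
  moreover have "\<not> parity (2^d) (\<lambda>j. ?P (j + 2^d))"
    by (subst parity_cong[where Q = "\<lambda>_. False"]) (simp_all add: Mnu_Suc_high Mnu_add_period)
  ultimately have "\<not> parity (2^d) ?P"
    unfolding parity_double by blast
  moreover have "parity (2^d) ?P = parity (2^d) (\<lambda>j. Mnu d \<nu> q j \<and> v j)"
    using Mnu_Suc_low_pair[of _ d \<nu> q] by (intro parity_cong) auto
  ultimately show ?thesis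
    by simp
qed

lemma Mnu_Suc_kernel_right:
  assumes "\<forall>q<2 * 2^d. \<not> parity (2 * 2^d) (\<lambda>j. Mnu (Suc d) \<nu> q j \<and> v j)"
    and "\<forall>j<2^d. \<not> v j" and "q < 2^d"
  shows "\<not> parity (2^d) (\<lambda>j. Mnu d (\<lambda>j. \<nu> (j + 2^d)) q j \<and> v (j + 2^d))"
proof -
  have "\<not> parity (2 * 2^d) (\<lambda>j. Mnu (Suc d) \<nu> q j \<and> v j)"
    using assms(1,3) by simp
  moreover have "\<not> parity (2^d) (\<lambda>j. Mnu (Suc d) \<nu> q j \<and> v j)"
    using assms(2) by (subst parity_cong[where Q = "\<lambda>_. False"]) auto
  ultimately have "\<not> parity (2^d) (\<lambda>j. Mnu (Suc d) \<nu> q (j + 2^d) \<and> v (j + 2^d))"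
    unfolding parity_double by simp
  moreover have "parity (2^d) (\<lambda>j. Mnu (Suc d) \<nu> q (j + 2^d) \<and> v (j + 2^d)) =
                 parity (2^d) (\<lambda>j. Mnu d (\<lambda>j. \<nu> (j + 2^d)) q j \<and> v (j + 2^d))"
    by (rule parity_cong) (simp add: Mnu_Suc_high)
  ultimately show ?thesis
    by simp
qed

lemma Mnu_kernel_trivial:
  assumes "\<forall>q<2^d. \<not> parity (2^d) (\<lambda>j. Mnu d \<nu> q j \<and> v j)" and "j < 2^d"
  shows "\<not> v j"
  using assms
proof (induction d arbitrary: \<nu> v j)
  case 0
  then show ?case
    by (simp add: parity_Suc Mnu_eq)
next
  case (Suc d)
  then have kernel: "\<forall>q<2 * 2^d. \<not> parity (2 * 2^d) (\<lambda>j. Mnu (Suc d) \<nu> q j \<and> v j)"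
    by simp
  have left: "\<forall>j<2^d. \<not> v j"
    using Suc.IH Mnu_Suc_kernel_left[OF kernel] by blast
  have right: "\<not> v (j + 2^d)" if "j < 2^d" for j
    using Suc.IH[of "\<lambda>j. \<nu> (j + 2^d)" "\<lambda>j. v (j + 2^d)" j] Mnu_Suc_kernel_right[OF kernel left] that
    by blast
  show ?case
  proof (cases "j < 2^d")
    case False
    then have "j - 2^d < 2^d" "j - 2^d + 2^d = j"
      using Suc.prems(2) by auto
    then show ?thesis
      using right[of "j - 2^d"] by simp
  qed (use left in blast)
qed

section \<open>Vectors over \<open>F_2\<close> and the linear form \<open>lam\<close>\<close>

definition vecs :: "nat \<Rightarrow> (nat \<Rightarrow> bool) set" where
  "vecs n = {v. \<forall>k\<ge>n. \<not> v k}"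

definition vadd :: "(nat \<Rightarrow> bool) \<Rightarrow> (nat \<Rightarrow> bool) \<Rightarrow> nat \<Rightarrow> bool" where
  "vadd u v = (\<lambda>k. u k \<noteq> v k)"

definition unit_vec :: "nat \<Rightarrow> nat \<Rightarrow> bool" where
  "unit_vec k = (\<lambda>j. j = k)"

lemma vecs_eq_image_Pow: "vecs n = (\<lambda>S k. k \<in> S) ` Pow {..<n}"
proof
  show "vecs n \<subseteq> (\<lambda>S k. k \<in> S) ` Pow {..<n}"
  proof
    fix v assume "v \<in> vecs n"
    then have "{k. v k} \<in> Pow {..<n}" and "v = (\<lambda>k. k \<in> {k. v k})"
      by (auto simp: vecs_def not_le[symmetric])
    then show "v \<in> (\<lambda>S k. k \<in> S) ` Pow {..<n}"
      by blast
  qed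
qed (auto simp: vecs_def)

lemma finite_vecs [simp]: "finite (vecs n)"
  by (simp add: vecs_eq_image_Pow)

lemma card_vecs: "card (vecs n) = 2^n"
proof -
  have "inj_on (\<lambda>S k. k \<in> S) (Pow {..<n})"
    by (rule inj_onI) (simp add: fun_eq_iff set_eq_iff)
  then show ?thesis
    by (simp add: vecs_eq_image_Pow card_image card_Pow)
qed

lemma vadd_vecs: "u \<in> vecs n \<Longrightarrow> v \<in> vecs n \<Longrightarrow> vadd u v \<in> vecs n"
  by (simp add: vecs_def vadd_def)

lemma vadd_vadd_cancel [simp]: "vadd (vadd u v) v = u"
  by (auto simp: vadd_def)

lemma parity_and_vadd:
  "parity n (\<lambda>j. P j \<and> vadd u v j) = (parity n (\<lambda>j. P j \<and> u j) \<noteq> parity n (\<lambda>j. P j \<and> v j))"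
proof -
  have "parity n (\<lambda>j. P j \<and> vadd u v j) = parity n (\<lambda>j. (P j \<and> u j) \<noteq> (P j \<and> v j))"
    by (rule parity_cong) (auto simp: vadd_def)
  then show ?thesis
    by (simp only: parity_xor)
qed

lemma unit_vec_vecs: "k < n \<Longrightarrow> unit_vec k \<in> vecs n"
  by (simp add: vecs_def unit_vec_def)

lemma wvec_inj:
  assumes "i < 2^e" "i' < 2^e" "\<forall>k<e. wvec e i k = wvec e i' k"
  shows "i = i'"
proof (rule bit_eqI)
  fix m
  show "bit i m = bit i' m"
  proof (cases "m < e")
    case True
    then have "e - 1 - (e - 1 - m) = m"
      by simp
    then show ?thesis
      using assms(3)[rule_format, of "e - 1 - m"] True by (simp add: wvec_def bit_iff_odd)
  next
    case False
    then have "(2::nat)^e \<le> 2^m"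
      by simp
    then have "i < 2^m" "i' < 2^m"
      using assms(1,2) by linarith+
    then show ?thesis
      by (simp add: bit_iff_odd)
  qed
qed

lemma wvec_surj:
  assumes "v \<in> vecs e"
  obtains i where "i < 2^e" "\<forall>k<e. wvec e i k = v k"
proof -
  define W where "W i = (\<lambda>k. k < e \<and> wvec e i k)" for i
  have "inj_on W {..<2^e}"
    by (rule inj_onI) (auto simp: W_def fun_eq_iff intro: wvec_inj)
  then have "card (W ` {..<2^e}) = card (vecs e)"
    by (simp add: card_image card_vecs)
  moreover have "W ` {..<2^e} \<subseteq> vecs e"
    by (auto simp: W_def vecs_def)
  ultimately have "W ` {..<2^e} = vecs e"
    using card_subset_eq[OF finite_vecs] by blast
  then obtain i where "i < 2^e" "W i = v"
    using assms by (metis imageE lessThan_iff)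
  then show ?thesis
    by (intro that[of i]) (auto simp: W_def dest: fun_cong)
qed

lemma wvec_Suc_even:
  assumes "even i" "k < e"
  shows "wvec e (Suc i) k = (wvec e i k \<noteq> (k = e - 1))"
proof (cases "k = e - 1")
  case False
  then obtain m where m: "e - Suc k = Suc m"
    using assms(2) by (cases "e - Suc k") auto
  have "Suc i div 2^Suc m = i div 2^Suc m"
    using assms(1) by (auto elim!: evenE simp: div_mult2_eq)
  then show ?thesis
    using False by (simp add: wvec_def m)
qed (use assms in \<open>simp add: wvec_def\<close>)

locale necklace =
  fixes d :: nat and \<nu> :: "nat \<Rightarrow> nat" and z :: "nat \<Rightarrow> bool"
  assumes d_pos: "0 < d"
begin

abbreviation e :: nat where "e \<equiv> 2^d"

lemma even_e: "even e"
  using d_pos by simp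

definition Mmul :: "(nat \<Rightarrow> bool) \<Rightarrow> nat \<Rightarrow> bool" where
  "Mmul v = (\<lambda>q. q < e \<and> parity e (\<lambda>j. Mnu d \<nu> q j \<and> v j))"

lemma Mmul_vecs: "Mmul v \<in> vecs e"
  by (simp add: Mmul_def vecs_def)

lemma Mmul_vadd: "Mmul (vadd u v) = vadd (Mmul u) (Mmul v)"
  unfolding Mmul_def parity_and_vadd by (auto simp: vadd_def)

lemma Mmul_cong: "(\<And>j. j < e \<Longrightarrow> u j = v j) \<Longrightarrow> Mmul u = Mmul v"
  unfolding Mmul_def by (simp add: fun_eq_iff cong: parity_cong)

lemma Mmul_inj: "inj_on Mmul (vecs e)"
proof (rule inj_onI)
  fix u v assume u: "u \<in> vecs e" and v: "v \<in> vecs e" and eq: "Mmul u = Mmul v"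
  have "Mmul (vadd u v) = (\<lambda>_. False)"
    by (simp only: Mmul_vadd eq) (simp add: vadd_def)
  then have "\<forall>q<e. \<not> parity e (\<lambda>j. Mnu d \<nu> q j \<and> vadd u v j)"
    by (simp add: Mmul_def fun_eq_iff)
  then have "\<not> vadd u v j" if "j < e" for j
    using Mnu_kernel_trivial that by blast
  with u v show "u = v"
    by (auto simp: fun_eq_iff vadd_def vecs_def not_less[symmetric])
qed

lemma Mmul_image: "Mmul ` vecs e = vecs e"
  using Mmul_vecs by (intro endo_inj_surj finite_vecs Mmul_inj) blast

definition Minv :: "(nat \<Rightarrow> bool) \<Rightarrow> nat \<Rightarrow> bool" where
  "Minv = the_inv_into (vecs e) Mmul"

lemma Minv_vecs: "u \<in> vecs e \<Longrightarrow> Minv u \<in> vecs e"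
  unfolding Minv_def by (rule the_inv_into_into[OF Mmul_inj]) (simp_all add: Mmul_image)

lemma Mmul_Minv: "u \<in> vecs e \<Longrightarrow> Mmul (Minv u) = u"
  unfolding Minv_def by (rule f_the_inv_into_f[OF Mmul_inj]) (simp add: Mmul_image)

lemma Minv_Mmul: "v \<in> vecs e \<Longrightarrow> Minv (Mmul v) = v"
  unfolding Minv_def by (rule the_inv_into_f_f[OF Mmul_inj])

lemma Minv_vadd:
  assumes "u \<in> vecs e" "v \<in> vecs e"
  shows "Minv (vadd u v) = vadd (Minv u) (Minv v)"
proof -
  have "Mmul (vadd (Minv u) (Minv v)) = vadd u v"
    using assms by (simp add: Mmul_vadd Mmul_Minv)
  then have "Minv (vadd u v) = Minv (Mmul (vadd (Minv u) (Minv v)))"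
    by simp
  also have "\<dots> = vadd (Minv u) (Minv v)"
    using assms by (intro Minv_Mmul vadd_vecs Minv_vecs)
  finally show ?thesis .
qed

text \<open>\<open>lam u\<close> is the coefficient of the last column of \<open>M\<close>, the all-ones column, when \<open>u\<close>
  is written as a combination of the columns of \<open>M\<close>.\<close>
definition lam :: "(nat \<Rightarrow> bool) \<Rightarrow> bool" where
  "lam u = Minv u (e - 1)"

lemma lam_vadd:
  assumes "u \<in> vecs e" "v \<in> vecs e"
  shows "lam (vadd u v) = (lam u \<noteq> lam v)"
  unfolding lam_def Minv_vadd[OF assms] by (simp add: vadd_def)

definition ones :: "nat \<Rightarrow> bool" where
  "ones = (\<lambda>k. k < e)"

lemma ones_vecs: "ones \<in> vecs e"
  by (simp add: ones_def vecs_def)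

lemma Mmul_unit_vec_last: "Mmul (unit_vec (e - 1)) = ones"
proof -
  have "parity e (\<lambda>j. Mnu d \<nu> q j \<and> unit_vec (e - 1) j)" for q
  proof -
    have "parity e (\<lambda>j. Mnu d \<nu> q j \<and> unit_vec (e - 1) j) = parity e (\<lambda>j. j = e - 1 \<and> Mnu d \<nu> q j)"
      by (rule parity_cong) (auto simp: unit_vec_def)
    also have "\<dots> = Mnu d \<nu> q (e - 1)"
      by (rule parity_single) simp
    finally show ?thesis
      using Mmat_last_column[of d] by (simp add: Mnu_eq)
  qed
  then show ?thesis
    by (simp add: Mmul_def ones_def fun_eq_iff)
qed

lemma lam_ones: "lam ones"
proof -
  have "Minv ones = unit_vec (e - 1)"
    using Minv_Mmul[OF unit_vec_vecs, of "e - 1"] unfolding Mmul_unit_vec_last by simp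
  then show ?thesis
    by (simp add: lam_def unit_vec_def)
qed

lemma lam_zero: "\<not> lam (\<lambda>_. False)"
  using lam_vadd[OF ones_vecs ones_vecs] by (simp add: vadd_def)

definition rotl :: "(nat \<Rightarrow> bool) \<Rightarrow> nat \<Rightarrow> bool" where
  "rotl u = (\<lambda>q. q < e \<and> u (Suc q mod e))"

lemma rotl_vecs: "rotl u \<in> vecs e"
  by (simp add: rotl_def vecs_def)

lemma rotl_vadd: "rotl (vadd u v) = vadd (rotl u) (rotl v)"
  by (auto simp: rotl_def vadd_def fun_eq_iff)

lemma rotl_ones: "rotl ones = ones"
  by (auto simp: rotl_def ones_def fun_eq_iff)

lemma rotl_unit_vec: "Suc q < e \<Longrightarrow> rotl (unit_vec (Suc q)) = unit_vec q"
  by (auto simp: rotl_def unit_vec_def fun_eq_iff mod_Suc)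

text \<open>A rotation invariant \<open>lam\<close> would be constant on the unit vectors, and then the even number
  \<open>e\<close> of them would add up to \<open>lam ones = False\<close>.\<close>
lemma lam_rotl_differ: "\<exists>u\<in>vecs e. lam u \<noteq> lam (rotl u)"
proof (rule ccontr)
  assume "\<not> ?thesis"
  then have invariant: "lam (rotl u) = lam u" if "u \<in> vecs e" for u
    using that by blast
  have unit_const: "lam (unit_vec q) = lam (unit_vec 0)" if "q < e" for q
    using that
  proof (induction q)
    case (Suc q)
    have "lam (unit_vec (Suc q)) = lam (rotl (unit_vec (Suc q)))"
      using invariant[OF unit_vec_vecs[OF Suc.prems]] by simp
    also have "\<dots> = lam (unit_vec q)"
      using rotl_unit_vec[OF Suc.prems] by simp
    also have "\<dots> = lam (unit_vec 0)"
      using Suc by simp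
    finally show ?case .
  qed simp
  have prefix: "lam (\<lambda>k. k < m) = parity m (\<lambda>q. lam (unit_vec q))" if "m \<le> e" for m
    using that
  proof (induction m)
    case 0
    then show ?case
      using lam_zero by simp
  next
    case (Suc m)
    have "(\<lambda>k. k < Suc m) = vadd (\<lambda>k. k < m) (unit_vec m)"
      by (auto simp: vadd_def unit_vec_def fun_eq_iff)
    moreover have "(\<lambda>k. k < m) \<in> vecs e"
      using Suc.prems by (simp add: vecs_def)
    moreover have "unit_vec m \<in> vecs e"
      using Suc.prems by (simp add: unit_vec_vecs)
    ultimately have "lam (\<lambda>k. k < Suc m) = (lam (\<lambda>k. k < m) \<noteq> lam (unit_vec m))"
      by (simp add: lam_vadd)
    then show ?case
      using Suc by (simp add: parity_Suc)
  qed
  have "lam ones = parity e (\<lambda>q. lam (unit_vec q))"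
    using prefix[of e] by (simp add: ones_def)
  also have "\<dots> = parity e (\<lambda>_. lam (unit_vec 0))"
    by (rule parity_cong) (rule unit_const)
  finally show False
    using lam_ones even_e by simp
qed

lemma lam_rotl_surj: "\<exists>p\<in>vecs e. lam p = a \<and> lam (rotl p) = b"
proof -
  obtain u where u: "u \<in> vecs e" "lam u \<noteq> lam (rotl u)"
    using lam_rotl_differ by blast
  have "(\<lambda>_. False) \<in> vecs e" "rotl (\<lambda>_. False) = (\<lambda>_. False)"
    by (simp_all add: vecs_def rotl_def)
  then have zero: "\<exists>p\<in>vecs e. \<not> lam p \<and> \<not> lam (rotl p)"
    using lam_zero by metis
  have "lam ones" "lam (rotl ones)"
    by (simp_all add: lam_ones rotl_ones)
  then have one: "\<exists>p\<in>vecs e. lam p \<and> lam (rotl p)"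
    using ones_vecs by blast
  have "vadd u ones \<in> vecs e"
    using u(1) ones_vecs by (rule vadd_vecs)
  moreover have "lam (vadd u ones) = (\<not> lam u)" "lam (rotl (vadd u ones)) = (\<not> lam (rotl u))"
    using lam_vadd[OF u(1) ones_vecs] lam_vadd[OF rotl_vecs ones_vecs, of u] lam_ones
    by (simp_all add: rotl_vadd rotl_ones)
  ultimately have flipped: "\<exists>p\<in>vecs e. lam p = (\<not> lam u) \<and> lam (rotl p) = (\<not> lam (rotl u))"
    by blast
  show ?thesis
  proof (cases "a = b")
    case True
    then show ?thesis
      using zero one by (cases a) auto
  next
    case False
    then have "(a = lam u \<and> b = lam (rotl u)) \<or> (a = (\<not> lam u) \<and> b = (\<not> lam (rotl u)))"
      using u(2) by blast
    then show ?thesis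
      using u(1) flipped by blast
  qed
qed

definition lam_class :: "bool \<Rightarrow> bool \<Rightarrow> (nat \<Rightarrow> bool) set" where
  "lam_class a b = {u \<in> vecs e. lam u = a \<and> lam (rotl u) = b}"

lemma vadd_lam_class:
  assumes "u \<in> lam_class a b" "p \<in> vecs e"
  shows "vadd u p \<in> lam_class (a \<noteq> lam p) (b \<noteq> lam (rotl p))"
proof -
  have u: "u \<in> vecs e" "lam u = a" "lam (rotl u) = b"
    using assms(1) by (simp_all add: lam_class_def)
  have "lam (vadd u p) = (a \<noteq> lam p)"
    using lam_vadd[OF u(1) assms(2)] u(2) by simp
  moreover have "lam (rotl (vadd u p)) = (b \<noteq> lam (rotl p))"
    using lam_vadd[OF rotl_vecs rotl_vecs, of u p] u(3) by (simp add: rotl_vadd)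
  ultimately show ?thesis
    using vadd_vecs[OF u(1) assms(2)] by (simp add: lam_class_def)
qed

lemma card_lam_class_translate:
  assumes "p \<in> vecs e"
  shows "card (lam_class (a \<noteq> lam p) (b \<noteq> lam (rotl p))) = card (lam_class a b)"
proof -
  have "(\<lambda>u. vadd u p) ` lam_class a b = lam_class (a \<noteq> lam p) (b \<noteq> lam (rotl p))"
  proof (intro equalityI subsetI)
    fix u assume "u \<in> (\<lambda>u. vadd u p) ` lam_class a b"
    then show "u \<in> lam_class (a \<noteq> lam p) (b \<noteq> lam (rotl p))"
      using vadd_lam_class[OF _ assms] by blast
  next
    fix u assume "u \<in> lam_class (a \<noteq> lam p) (b \<noteq> lam (rotl p))"
    then have "vadd u p \<in> lam_class ((a \<noteq> lam p) \<noteq> lam p) ((b \<noteq> lam (rotl p)) \<noteq> lam (rotl p))"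
      by (rule vadd_lam_class[OF _ assms])
    moreover have "((a \<noteq> lam p) \<noteq> lam p) = a" "((b \<noteq> lam (rotl p)) \<noteq> lam (rotl p)) = b"
      by auto
    ultimately have "vadd u p \<in> lam_class a b"
      by (simp only:)
    then show "u \<in> (\<lambda>u. vadd u p) ` lam_class a b"
      by (metis image_eqI vadd_vadd_cancel)
  qed
  moreover have "inj_on (\<lambda>u. vadd u p) (lam_class a b)"
    by (metis inj_onI vadd_vadd_cancel)
  ultimately show ?thesis
    by (metis card_image)
qed

lemma finite_lam_class: "finite (lam_class a b)"
  unfolding lam_class_def by simp

lemma card_lam_class: "4 * card (lam_class a b) = 2^e"
proof -
  have same: "card (lam_class a b) = card (lam_class False False)" for a b
  proof -
    obtain p where "p \<in> vecs e" "lam p = a" "lam (rotl p) = b"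
      using lam_rotl_surj by blast
    then show ?thesis
      using card_lam_class_translate[of p False False] by simp
  qed
  have "vecs e = (\<Union>ab. lam_class (fst ab) (snd ab))"
    by (auto simp: lam_class_def)
  moreover have "\<forall>ab\<in>UNIV. \<forall>ab'\<in>UNIV. ab \<noteq> ab' \<longrightarrow>
      lam_class (fst ab) (snd ab) \<inter> lam_class (fst ab') (snd ab') = {}"
    by (auto simp: lam_class_def prod_eq_iff)
  ultimately have "card (vecs e) = (\<Sum>ab\<in>UNIV. card (lam_class (fst ab) (snd ab)))"
    by (simp add: card_UN_disjoint finite_lam_class)
  also have "\<dots> = (\<Sum>ab\<in>(UNIV :: (bool \<times> bool) set). card (lam_class False False))"
    using same[of "fst ab" "snd ab" for ab] by (simp only:)
  also have "\<dots> = 4 * card (lam_class False False)"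
    using card_cartesian_product[of "UNIV :: bool set" "UNIV :: bool set"] by simp
  finally show ?thesis
    using same[of a b] by (simp add: card_vecs)
qed

end

section \<open>Blocks of a necklace\<close>

lemma length_concat_uniform:
  "(\<And>n. n < M \<Longrightarrow> length (f n) = e) \<Longrightarrow> length (concat (map f [0..<M])) = M * e"
  by (induction M) auto

lemma nth_concat_uniform:
  assumes "\<And>n. n < M \<Longrightarrow> length (f n) = e" "n < M" "q < e"
  shows "concat (map f [0..<M]) ! (n * e + q) = f n ! q"
  using assms
proof (induction M)
  case (Suc M)
  have length: "length (concat (map f [0..<M])) = M * e"
    using Suc.prems(1) by (intro length_concat_uniform) simp
  show ?case
  proof (cases "n < M")
    case True
    have "n * e + q < Suc n * e"
      using Suc.prems(3) by simp
    also have "\<dots> \<le> M * e"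
      using True by (intro mult_right_mono) auto
    finally show ?thesis
      using Suc True length by (simp add: nth_append)
  next
    case False
    then have "n = M"
      using Suc.prems(2) by simp
    then show ?thesis
      using length by (simp add: nth_append)
  qed
qed simp

lemma length_necklace_word: "length (necklace_word d \<nu> z) = 2^(2^d) * 2^d"
  unfolding necklace_word_def by (rule length_concat_uniform) simp

lemma Suc_less_even:
  fixes i m :: nat
  shows "even m \<Longrightarrow> even i \<Longrightarrow> i < m \<Longrightarrow> Suc i < m"
  by (metis Suc_lessI even_Suc)

context necklace
begin

definition block :: "nat \<Rightarrow> nat \<Rightarrow> bool" where
  "block i = Mmul (\<lambda>k. wvec e i k \<noteq> z k)"

lemma nth_necklace_word: "i < 2^e \<Longrightarrow> q < e \<Longrightarrow> necklace_word d \<nu> z ! (i * e + q) = block i q"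
  unfolding necklace_word_def
  by (subst nth_concat_uniform[where e = e]) (auto simp: block_def Mmul_def matvec_def parity_def)

lemma even_iff_lam_block: "even i \<longleftrightarrow> lam (block i) = z (e - 1)"
proof -
  define x where "x = (\<lambda>k. k < e \<and> (wvec e i k \<noteq> z k))"
  have "x \<in> vecs e"
    by (simp add: x_def vecs_def)
  moreover have "block i = Mmul x"
    unfolding block_def x_def by (rule Mmul_cong) simp
  ultimately have "lam (block i) = (wvec e i (e - 1) \<noteq> z (e - 1))"
    by (simp add: lam_def Minv_Mmul x_def)
  then show ?thesis
    by (cases "z (e - 1)") (auto simp: wvec_def)
qed

lemma block_surj:
  assumes "u \<in> vecs e"
  obtains i where "i < 2^e" "block i = u"
proof -
  have "(\<lambda>k. k < e \<and> (Minv u k \<noteq> z k)) \<in> vecs e"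
    by (simp add: vecs_def)
  then obtain i where i: "i < 2^e" "\<forall>k<e. wvec e i k = (k < e \<and> (Minv u k \<noteq> z k))"
    by (rule wvec_surj)
  have "block i = Mmul (Minv u)"
    unfolding block_def using i(2) by (intro Mmul_cong) auto
  then show ?thesis
    using that i(1) Mmul_Minv[OF assms] by simp
qed

lemma block_Suc_even: "even i \<Longrightarrow> block (Suc i) = vadd (block i) ones"
proof -
  assume "even i"
  then have "block (Suc i) = Mmul (vadd (\<lambda>k. wvec e i k \<noteq> z k) (unit_vec (e - 1)))"
    unfolding block_def by (intro Mmul_cong) (auto simp: wvec_Suc_even vadd_def unit_vec_def)
  then show ?thesis
    unfolding Mmul_vadd Mmul_unit_vec_last by (simp only: block_def)
qed

text \<open>For even \<open>i\<close> the next block is the complement of \<open>u = block i\<close>, so the \<open>e\<close> bits that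
  follow the first bit of \<open>u\<close> in the necklace are \<open>shift_block u\<close>.\<close>
definition shift_block :: "(nat \<Rightarrow> bool) \<Rightarrow> nat \<Rightarrow> bool" where
  "shift_block u = vadd (rotl u) (unit_vec (e - 1))"

lemma shift_block_vecs: "shift_block u \<in> vecs e"
  unfolding shift_block_def by (intro vadd_vecs rotl_vecs unit_vec_vecs) simp

lemma shift_block_apply: "q < e \<Longrightarrow> shift_block u q = (if q < e - 1 then u (Suc q) else \<not> u 0)"
  by (auto simp: shift_block_def rotl_def vadd_def unit_vec_def)

lemma lam_shift_block: "u \<in> vecs e \<Longrightarrow> lam (shift_block u) = (lam (rotl u) \<noteq> lam (unit_vec (e - 1)))"
  unfolding shift_block_def by (intro lam_vadd rotl_vecs unit_vec_vecs) simp

definition good_blocks :: "nat set" where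
  "good_blocks = {i. i < 2^e \<and> even i \<and> (\<exists>j<2^e. even j \<and> block j = shift_block (block i))}"

lemma card_good_blocks: "2^e \<le> 4 * card good_blocks"
proof -
  define b where "b = z (e - 1)"
  define U where "U = lam_class b (b \<noteq> lam (unit_vec (e - 1)))"
  have "U \<subseteq> block ` good_blocks"
  proof
    fix u assume "u \<in> U"
    then have u: "u \<in> vecs e" "lam u = b" "lam (rotl u) = (b \<noteq> lam (unit_vec (e - 1)))"
      by (simp_all add: U_def lam_class_def)
    obtain i where i: "i < 2^e" "block i = u"
      using block_surj[OF u(1)] .
    obtain j where j: "j < 2^e" "block j = shift_block u"
      using block_surj[OF shift_block_vecs] .
    have "even i"
      using even_iff_lam_block i u b_def by simp
    moreover have "even j"
      using even_iff_lam_block[of j] j lam_shift_block[OF u(1)] u(3) b_def by auto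
    ultimately have "i \<in> good_blocks"
      using i j by (auto simp: good_blocks_def)
    then show "u \<in> block ` good_blocks"
      using i by blast
  qed
  moreover have "finite good_blocks"
    by (simp add: good_blocks_def)
  ultimately have "card U \<le> card good_blocks"
    by (meson card_image_le card_mono finite_imageI order_trans)
  moreover have "4 * card U = 2^e"
    unfolding U_def by (rule card_lam_class)
  ultimately show ?thesis
    by simp
qed

lemma necklace_word_window:
  assumes i: "i < 2^e" "even i" and j: "j < 2^e" "even j" "block j = shift_block (block i)"
    and t: "1 \<le> t" "t + k \<le> e" and p: "p < e + k"
  shows "necklace_word d \<nu> z ! (i * e + t + p) = necklace_word d \<nu> z ! (j * e + (t - 1) + p)"
proof -
  have si: "Suc i < 2^e" and sj: "Suc j < 2^e"
    using i j by (simp_all add: Suc_less_even even_e)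
  have shifted: "block j q = (if q < e - 1 then block i (Suc q) else \<not> block i 0)" if "q < e" for q
    using shift_block_apply[OF that] j(3) by simp
  have complement: "block (Suc i') r = (\<not> block i' r)" if "even i'" "r < e" for i' r
    using that block_Suc_even[of i'] by (simp add: vadd_def ones_def)
  show ?thesis
  proof (cases "t + p < e")
    case True
    then have "necklace_word d \<nu> z ! (i * e + t + p) = block i (t + p)"
      using nth_necklace_word[OF i(1) True] by (simp add: add.assoc)
    moreover have "necklace_word d \<nu> z ! (j * e + (t - 1) + p) = block j (t - 1 + p)"
      using nth_necklace_word[OF j(1), of "t - 1 + p"] True t by (simp add: add.assoc)
    moreover have "t - 1 + p < e - 1" "Suc (t - 1 + p) = t + p"
      using True t by auto
    ultimately show ?thesis
      using shifted[of "t - 1 + p"] by simp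
  next
    case False
    define r where "r = t + p - e"
    have r: "r < e" "i * e + t + p = Suc i * e + r"
      using False t p by (auto simp: r_def)
    have left: "necklace_word d \<nu> z ! (i * e + t + p) = (\<not> block i r)"
      unfolding r(2) using nth_necklace_word[OF si r(1)] complement[OF i(2) r(1)] by simp
    show ?thesis
    proof (cases "r = 0")
      case True
      then have "j * e + (t - 1) + p = j * e + (e - 1)"
        using False t by (simp add: r_def)
      then show ?thesis
        using left True nth_necklace_word[OF j(1), of "e - 1"] shifted[of "e - 1"] by simp
    next
      case False
      then have "j * e + (t - 1) + p = Suc j * e + (r - 1)" "r - 1 < e - 1"
        using \<open>\<not> t + p < e\<close> t r(1) by (auto simp: r_def)
      then show ?thesis
        using left nth_necklace_word[OF sj, of "r - 1"] complement[OF j(2), of "r - 1"]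
          shifted[of "r - 1"] False by simp
    qed
  qed
qed

end

section \<open>Binary expansions and pair correlations\<close>

definition binary_tail :: "(nat \<Rightarrow> bool) \<Rightarrow> nat \<Rightarrow> real" where
  "binary_tail \<rho> n = (\<Sum>p. of_bool (\<rho> (n + p)) / 2^(p + 1))"

lemma summable_binary_digits: "summable (\<lambda>p. of_bool (\<rho> (n + p)) / 2^(p + 1) :: real)"
proof (rule summable_comparison_test'[OF summable_geometric[of "1/2"]])
  show "norm (of_bool (\<rho> (n + p)) / 2^(p + 1) :: real) \<le> (1/2)^p" for p
    by (simp add: power_divide field_simps)
qed simp

lemma binary_tail_bounds: "0 \<le> binary_tail \<rho> n" "binary_tail \<rho> n \<le> 1"
proof -
  show "0 \<le> binary_tail \<rho> n"
    unfolding binary_tail_def by (intro suminf_nonneg summable_binary_digits) simp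
  have half: "(\<lambda>p. (1/2::real)^Suc p) sums 1"
    by (rule power_half_series)
  have "binary_tail \<rho> n \<le> (\<Sum>p. (1/2::real)^Suc p)"
    unfolding binary_tail_def
    by (rule suminf_le[OF _ summable_binary_digits sums_summable[OF half]]) (simp add: power_divide)
  also have "\<dots> = 1"
    using half by (simp add: sums_iff)
  finally show "binary_tail \<rho> n \<le> 1" .
qed

lemma binary_tail_split:
  "binary_tail \<rho> n = (\<Sum>p<m. of_bool (\<rho> (n + p)) / 2^(p + 1)) + binary_tail \<rho> (n + m) / 2^m"
proof -
  have "binary_tail \<rho> n = (\<Sum>p. of_bool (\<rho> (n + (p + m))) / 2^(p + m + 1))
                           + (\<Sum>p<m. of_bool (\<rho> (n + p)) / 2^(p + 1))"
    unfolding binary_tail_def by (rule suminf_split_initial_segment[OF summable_binary_digits])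
  also have "(\<Sum>p. of_bool (\<rho> (n + (p + m))) / 2^(p + m + 1)) =
             (\<Sum>p. of_bool (\<rho> (n + m + p)) / 2^(p + 1) / 2^m :: real)"
    by (simp add: power_add algebra_simps)
  also have "\<dots> = binary_tail \<rho> (n + m) / 2^m"
    unfolding binary_tail_def by (rule suminf_divide[OF summable_binary_digits])
  finally show ?thesis
    by simp
qed

lemma binary_tail_close:
  assumes "\<forall>p<m. \<rho> (n + p) = \<rho> (n' + p)"
  shows "\<bar>binary_tail \<rho> n - binary_tail \<rho> n'\<bar> \<le> 1 / 2^m"
proof -
  have "(\<Sum>p<m. of_bool (\<rho> (n + p)) / 2^(p + 1)) = (\<Sum>p<m. of_bool (\<rho> (n' + p)) / (2::real)^(p + 1))"
    using assms by (intro sum.cong) auto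
  then have "binary_tail \<rho> n - binary_tail \<rho> n' = (binary_tail \<rho> (n + m) - binary_tail \<rho> (n' + m)) / 2^m"
    using binary_tail_split[of \<rho> n m] binary_tail_split[of \<rho> n' m] by (simp add: diff_divide_distrib)
  moreover have "\<bar>binary_tail \<rho> (n + m) - binary_tail \<rho> (n' + m)\<bar> \<le> 1"
    using binary_tail_bounds[of \<rho> "n + m"] binary_tail_bounds[of \<rho> "n' + m"] by linarith
  ultimately show ?thesis
    by (simp add: divide_right_mono)
qed

lemma shifted_word_real: "\<exists>I::int. 2^n * word_real \<rho> = of_int I + binary_tail \<rho> n"
proof -
  have "word_real \<rho> = binary_tail \<rho> 0"
    by (simp add: word_real_def binary_tail_def of_bool_def)
  then have "2^n * word_real \<rho> = (\<Sum>p<n. 2^n * (of_bool (\<rho> p) / 2^(p + 1))) + binary_tail \<rho> n"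
    using binary_tail_split[of \<rho> 0 n] by (simp add: algebra_simps sum_distrib_left)
  also have "(\<Sum>p<n. 2^n * (of_bool (\<rho> p) / 2^(p + 1))) = (\<Sum>p<n. of_int (of_bool (\<rho> p) * 2^(n - Suc p)) :: real)"
  proof (rule sum.cong)
    fix p assume "p \<in> {..<n}"
    then have "n = (n - Suc p) + (p + 1)"
      by simp
    then have "(2::real)^n = 2^(n - Suc p) * 2^(p + 1)"
      by (metis power_add)
    then show "2^n * (of_bool (\<rho> p) / 2^(p + 1)) = (of_int (of_bool (\<rho> p) * 2^(n - Suc p)) :: real)"
      by simp
  qed simp
  finally show ?thesis
    by (metis of_int_sum)
qed

lemma dist_int_le_abs: "dist_int x \<le> \<bar>x\<bar>"
proof (cases "0 \<le> x")
  case True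
  then have "frac x \<le> x"
    by (simp add: frac_def)
  then show ?thesis
    using True by (simp add: dist_int_def)
next
  case False
  then have "\<lfloor>x\<rfloor> \<le> -1"
    by linarith
  then have "1 - frac x \<le> - x"
    unfolding frac_def by linarith
  then show ?thesis
    using False by (simp add: dist_int_def)
qed

lemma dist_int_add_of_int: "dist_int (x + of_int m) = dist_int x"
  by (simp add: dist_int_def)

lemma dist_int_minus: "dist_int (- x) = dist_int x"
proof (cases "x \<in> \<int>")
  case True
  then obtain k where "x = of_int k"
    by (auto elim: Ints_cases)
  then show ?thesis
    by (simp add: dist_int_def frac_def)
qed (simp add: dist_int_def frac_neg min.commute)

lemma dist_int_frac_shifts:
  assumes "\<forall>p<m. \<rho> (n + p) = \<rho> (n' + p)"
  shows "dist_int (frac (2^n * word_real \<rho>) - frac (2^n' * word_real \<rho>)) \<le> 1 / 2^m"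
proof -
  obtain I I' :: int where I: "2^n * word_real \<rho> = of_int I + binary_tail \<rho> n"
    and I': "2^n' * word_real \<rho> = of_int I' + binary_tail \<rho> n'"
    using shifted_word_real by metis
  have "frac (2^n * word_real \<rho>) - frac (2^n' * word_real \<rho>) =
        (binary_tail \<rho> n - binary_tail \<rho> n') + of_int (\<lfloor>binary_tail \<rho> n'\<rfloor> - \<lfloor>binary_tail \<rho> n\<rfloor>)"
    unfolding I I' frac_def by simp
  then have "dist_int (frac (2^n * word_real \<rho>) - frac (2^n' * word_real \<rho>)) =
             dist_int (binary_tail \<rho> n - binary_tail \<rho> n')"
    by (simp only: dist_int_add_of_int)
  also have "\<dots> \<le> \<bar>binary_tail \<rho> n - binary_tail \<rho> n'\<bar>"
    by (rule dist_int_le_abs)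
  also have "\<dots> \<le> 1 / 2^m"
    using binary_tail_close[OF assms] .
  finally show ?thesis .
qed

lemma FN_lower_bound:
  assumes "finite A" "A \<inter> prod.swap ` A = {}"
    and close: "\<And>i j. (i, j) \<in> A \<Longrightarrow> i \<in> {1..N} \<and> j \<in> {1..N} \<and> i \<noteq> j \<and> dist_int (x i - x j) < s / N"
  shows "2 * card A / N \<le> FN x N s"
proof -
  define P where "P = {(i, j). i \<in> {1..N} \<and> j \<in> {1..N} \<and> i \<noteq> j \<and> dist_int (x i - x j) < s / N}"
  have "A \<subseteq> P"
    using close by (auto simp: P_def)
  moreover have "prod.swap ` A \<subseteq> P"
    using close by (auto simp: P_def dist_int_minus[of "x _ - x _", simplified])
  ultimately have "A \<union> prod.swap ` A \<subseteq> P"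
    by blast
  moreover have "finite P"
    by (rule finite_subset[of _ "{1..N} \<times> {1..N}"]) (auto simp: P_def)
  ultimately have "card (A \<union> prod.swap ` A) \<le> card P"
    by (rule card_mono[rotated])
  moreover have "card (A \<union> prod.swap ` A) = 2 * card A"
    using assms(1,2) by (simp add: card_Un_disjoint card_image)
  ultimately have "2 * card A \<le> card P"
    by simp
  then show ?thesis
    by (simp add: FN_def P_def divide_right_mono flip: of_nat_mult)
qed

section \<open>Close pairs of shifts\<close>

lemma mult_add_eq_mult_add_imp:
  fixes e i i' t t' :: nat
  assumes "t < e" "t' < e" "i * e + t = i' * e + t'"
  shows "i = i'" "t = t'"
proof -
  have "(i * e + t) div e = i" "(i * e + t) mod e = t"
    "(i' * e + t') div e = i'" "(i' * e + t') mod e = t'"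
    using assms(1,2) by simp_all
  then show "i = i'" "t = t'"
    using assms(3) by metis+
qed

lemma mult_add_less_mult:
  fixes a e i m :: nat
  assumes "a < 2 * e" "Suc (Suc i) \<le> m"
  shows "i * e + a < m * e"
proof -
  have "i * e + a < Suc (Suc i) * e"
    using assms(1) by simp
  also have "\<dots> \<le> m * e"
    using assms(2) by (rule mult_right_mono) simp
  finally show ?thesis .
qed

lemma linear_le_power2: "6 \<le> d \<Longrightarrow> 4 * d + 24 \<le> (2::nat)^d"
proof (induction d rule: dec_induct)
  case (step d)
  then have "(4::nat) \<le> 2^d"
    using power_increasing[of 2 d "2::nat"] by simp
  with step show ?case
    by simp
qed simp

context necklace
begin

definition partner :: "nat \<Rightarrow> nat" where
  "partner i = (SOME j. j < 2^e \<and> even j \<and> block j = shift_block (block i))"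

lemma partner:
  assumes "i \<in> good_blocks"
  shows "partner i < 2^e" "even (partner i)" "block (partner i) = shift_block (block i)"
proof -
  have "\<exists>j. j < 2^e \<and> even j \<and> block j = shift_block (block i)"
    using assms by (auto simp: good_blocks_def)
  then have "partner i < 2^e \<and> even (partner i) \<and> block (partner i) = shift_block (block i)"
    unfolding partner_def by (rule someI_ex)
  then show "partner i < 2^e" "even (partner i)" "block (partner i) = shift_block (block i)"
    by simp_all
qed

text \<open>\<open>S\<close> is the position at which the necklace starts inside \<open>\<rho>\<close>.\<close>
definition shift_pair :: "nat \<Rightarrow> nat \<times> nat \<Rightarrow> nat \<times> nat" where
  "shift_pair S = (\<lambda>(i, t). (S + i * e + t, S + partner i * e + (t - 1)))"

definition shift_domain :: "nat \<Rightarrow> (nat \<times> nat) set" where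
  "shift_domain k = good_blocks \<times> {1..e - k}"

lemma shift_domain_bounds:
  assumes "(i, t) \<in> shift_domain k" "1 \<le> k"
  shows "i \<in> good_blocks" "1 \<le> t" "t < e" "t + k \<le> e"
  using assms by (auto simp: shift_domain_def)

lemma card_shift_domain: "2^e * (e - k) \<le> 4 * card (shift_domain k)"
  using card_good_blocks by (simp add: shift_domain_def card_cartesian_product)

lemma inj_on_shift_pair: "1 \<le> k \<Longrightarrow> inj_on (shift_pair S) (shift_domain k)"
proof (rule inj_onI)
  fix p q assume "1 \<le> k" "p \<in> shift_domain k" "q \<in> shift_domain k" "shift_pair S p = shift_pair S q"
  moreover obtain i t i' t' where p: "p = (i, t)" and q: "q = (i', t')"
    by fastforce
  ultimately have "i * e + t = i' * e + t'" "t < e" "t' < e"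
    using shift_domain_bounds by (auto simp: shift_pair_def)
  then show "p = q"
    using mult_add_eq_mult_add_imp[of t e t' i i'] p q by simp
qed

text \<open>The first coordinate of a shift pair sits at position \<open>t \<ge> 1\<close> of its block, the second at
  position \<open>t - 1\<close>.\<close>
lemma shift_pairs_swap_disjoint:
  assumes "1 \<le> k"
  shows "shift_pair S ` shift_domain k \<inter> prod.swap ` shift_pair S ` shift_domain k = {}"
proof (intro equals0I)
  fix ab assume "ab \<in> shift_pair S ` shift_domain k \<inter> prod.swap ` shift_pair S ` shift_domain k"
  then obtain i t i' t' where it: "(i, t) \<in> shift_domain k" "(i', t') \<in> shift_domain k"
    and swapped: "shift_pair S (i, t) = prod.swap (shift_pair S (i', t'))"
    by auto
  note bounds = shift_domain_bounds[OF it(1) assms] shift_domain_bounds[OF it(2) assms]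
  have eqs: "i * e + t = partner i' * e + (t' - 1)" "partner i * e + (t - 1) = i' * e + t'"
    using swapped by (simp_all add: shift_pair_def)
  from eqs(1) have "t = t' - 1"
    by (rule mult_add_eq_mult_add_imp(2)[rotated 2]) (use bounds in simp_all)
  moreover from eqs(2) have "t - 1 = t'"
    by (rule mult_add_eq_mult_add_imp(2)[rotated 2]) (use bounds in simp_all)
  ultimately show False
    using bounds by simp
qed

lemma shift_pair_close:
  assumes agree: "\<And>x. x < 2^e * e \<Longrightarrow> \<rho> (S + x) = necklace_word d \<nu> z ! x"
    and "(i, t) \<in> shift_domain k" "1 \<le> k"
    and ab: "shift_pair S (i, t) = (a, b)"
  shows "a \<in> {S..<S + 2^e * e}" "b \<in> {S..<S + 2^e * e}" "a \<noteq> b"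
    and "dist_int (frac (2^a * word_real \<rho>) - frac (2^b * word_real \<rho>)) \<le> 1 / 2^(e + k)"
proof -
  note t = shift_domain_bounds[OF assms(2,3)]
  have i: "i < 2^e" "even i" and j: "partner i < 2^e" "even (partner i)"
    "block (partner i) = shift_block (block i)"
    using t(1) partner[OF t(1)] by (auto simp: good_blocks_def)
  have a: "a = S + i * e + t" and b: "b = S + partner i * e + (t - 1)"
    using ab by (simp_all add: shift_pair_def)
  have "Suc (Suc i) \<le> 2^e" "Suc (Suc (partner i)) \<le> 2^e"
    using i j by (simp_all add: Suc_le_eq Suc_less_even even_e)
  then have bound: "i * e + (t + p) < 2^e * e" "partner i * e + (t - 1 + p) < 2^e * e" if "p < e + k" for p
    using that t by (intro mult_add_less_mult; simp)+
  have "i * e + t < 2^e * e" "partner i * e + (t - 1) < 2^e * e"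
    using bound[of 0] by simp_all
  then show "a \<in> {S..<S + 2^e * e}" "b \<in> {S..<S + 2^e * e}"
    unfolding a b atLeastLessThan_iff by linarith+
  show "a \<noteq> b"
  proof
    assume "a = b"
    then have "i * e + t = partner i * e + (t - 1)"
      by (simp add: a b)
    then have "t = t - 1"
      by (rule mult_add_eq_mult_add_imp(2)[rotated 2]) (use t in simp_all)
    with t show False
      by simp
  qed
  have "\<rho> (a + p) = \<rho> (b + p)" if "p < e + k" for p
  proof -
    have "\<rho> (S + (i * e + t + p)) = \<rho> (S + (partner i * e + (t - 1) + p))"
      using agree bound[OF that] necklace_word_window[OF i j t(2,4) that] by (simp only: add.assoc)
    then show ?thesis
      by (simp only: a b add.assoc)
  qed
  then show "dist_int (frac (2^a * word_real \<rho>) - frac (2^b * word_real \<rho>)) \<le> 1 / 2^(e + k)"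
    by (intro dist_int_frac_shifts) simp
qed

lemma FN_at_necklace_end:
  assumes agree: "\<And>x. x < 2^e * e \<Longrightarrow> \<rho> (S + x) = necklace_word d \<nu> z ! x"
    and S: "1 \<le> S" "S \<le> 2^e * e" and d: "6 \<le> d"
  shows "3/16 \<le> FN (\<lambda>n. frac (2^n * word_real \<rho>)) (S + 2^e * e) (1/16)"
proof -
  define k where "k = d + 6"
  define N where "N = S + 2^e * e"
  define A where "A = shift_pair S ` shift_domain k"
  have k: "1 \<le> k" "4 * k \<le> e"
    using linear_le_power2[OF d] by (simp_all add: k_def)
  have "16 * N \<le> 16 * (2^e * e + 2^e * e)"
    using S unfolding N_def by (intro mult_le_mono2 add_le_mono1)
  also have "\<dots> < 2^(e + k)"
    by (simp add: k_def power_add)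
  finally have "16 * real N < 2^(e + k)"
    by (metis of_nat_less_iff of_nat_mult of_nat_numeral of_nat_power)
  moreover have "0 < N"
    using S by (simp add: N_def)
  ultimately have scale: "1 / 2^(e + k) < (1/16) / real N"
    by (simp add: field_simps)
  have "a \<in> {1..N} \<and> b \<in> {1..N} \<and> a \<noteq> b \<and>
      dist_int (frac (2^a * word_real \<rho>) - frac (2^b * word_real \<rho>)) < (1/16) / N"
    if ab: "(a, b) \<in> A" for a b
  proof -
    obtain i t where it: "(i, t) \<in> shift_domain k" "shift_pair S (i, t) = (a, b)"
      using ab unfolding A_def by auto
    note close = shift_pair_close[OF agree it(1) k(1) it(2)]
    have "dist_int (frac (2^a * word_real \<rho>) - frac (2^b * word_real \<rho>)) < (1/16) / N"
      using close(4) scale by linarith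
    moreover have "a \<in> {1..N}" "b \<in> {1..N}"
      using close(1,2) S by (auto simp: N_def)
    ultimately show ?thesis
      using close(3) by blast
  qed
  moreover have "finite A" "A \<inter> prod.swap ` A = {}"
    using shift_pairs_swap_disjoint[OF k(1)] by (simp_all add: A_def shift_domain_def good_blocks_def)
  ultimately have "2 * card A / N \<le> FN (\<lambda>n. frac (2^n * word_real \<rho>)) N (1/16)"
    by (intro FN_lower_bound)
  moreover have "3 * N \<le> 32 * card A"
  proof -
    have "3 * N \<le> 3 * (2^e * e + 2^e * e)"
      using S unfolding N_def by (intro mult_le_mono2 add_le_mono1)
    also have "\<dots> \<le> 8 * (2^e * (e - k))"
      using k by simp
    also have "\<dots> \<le> 32 * card A"
      using card_shift_domain[of k] card_image[OF inj_on_shift_pair[of k S, OF k(1)]] unfolding A_def by linarith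
    finally show ?thesis .
  qed
  then have "3/16 \<le> 2 * card A / real N"
    using \<open>0 < N\<close> by (simp add: field_simps flip: of_nat_mult of_nat_le_iff)
  ultimately show ?thesis
    by (simp add: N_def)
qed

end

definition necklace_start :: "nat \<Rightarrow> nat" where
  "necklace_start d = (\<Sum>j<d. 2^(2^j) * 2^j)"

lemma necklace_start_le: "necklace_start d \<le> 2^(2^d) * 2^d"
proof (induction d)
  case (Suc d)
  have "necklace_start (Suc d) = necklace_start d + 2^(2^d) * 2^d"
    by (simp add: necklace_start_def)
  then have "necklace_start (Suc d) \<le> 2 * (2^(2^d) * 2^d)"
    using Suc by linarith
  also have "\<dots> \<le> 2^(2^Suc d) * 2^Suc d"
    by simp
  finally show ?case .
qed (simp add: necklace_start_def)

lemma necklace_start_pos: "0 < d \<Longrightarrow> 1 \<le> necklace_start d"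
  by (cases d) (simp_all add: necklace_start_def Suc_le_eq)

lemma strict_mono_necklace_start: "strict_mono necklace_start"
  unfolding strict_mono_Suc_iff by (simp add: necklace_start_def)

lemma in_L_FN_at_necklace_end:
  assumes "in_L \<rho>" "6 \<le> d"
  shows "3/16 \<le> FN (\<lambda>n. frac (2^n * word_real \<rho>)) (necklace_start (Suc d)) (1/16)"
proof -
  obtain \<rho>s where necklaces: "\<And>d. affine_necklace d (\<rho>s d)"
    and digits: "\<And>d i. i < length (\<rho>s d) \<Longrightarrow> \<rho> ((\<Sum>j<d. length (\<rho>s j)) + i) = \<rho>s d ! i"
    using assms(1) unfolding in_L_def by blast
  have words: "\<exists>\<nu> z. \<rho>s d = necklace_word d \<nu> z" for d
    using necklaces[of d] by (auto simp: affine_necklace_def)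
  then have start: "(\<Sum>j<d. length (\<rho>s j)) = necklace_start d" for d
    by (metis (no_types, lifting) length_necklace_word necklace_start_def sum.cong)
  obtain \<nu> z where word: "\<rho>s d = necklace_word d \<nu> z"
    using words by blast
  interpret necklace d \<nu> z
    using assms(2) by unfold_locales simp
  have "\<rho> (necklace_start d + i) = necklace_word d \<nu> z ! i" if "i < 2^e * e" for i
    using digits[of i d] start[of d] word that by (simp add: length_necklace_word)
  moreover have "necklace_start (Suc d) = necklace_start d + 2^e * e"
    by (simp add: necklace_start_def)
  ultimately show ?thesis
    using FN_at_necklace_end[of \<rho> "necklace_start d"] necklace_start_le[of d]
      necklace_start_pos[of d] assms(2) by simp
qed

theorem theorem1:
  fixes \<rho> :: "nat \<Rightarrow> bool"
  assumes "in_L \<rho>"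
  shows "\<not> poissonian_pc (\<lambda>n. frac (2 ^ n * word_real \<rho>))"
proof
  define x where "x = (\<lambda>n. frac (2 ^ n * word_real \<rho>))"
  assume "poissonian_pc (\<lambda>n. frac (2 ^ n * word_real \<rho>))"
  then have "(\<lambda>N. FN x N (1/16)) \<longlonglongrightarrow> 2 * (1/16)"
    unfolding poissonian_pc_def x_def by (metis zero_le_divide_1_iff zero_le_numeral)
  then have "(\<lambda>d. FN x (necklace_start d) (1/16)) \<longlonglongrightarrow> 1/8"
    using LIMSEQ_subseq_LIMSEQ[OF _ strict_mono_necklace_start] by (simp add: o_def)
  then have "(\<lambda>d. FN x (necklace_start (Suc d)) (1/16)) \<longlonglongrightarrow> 1/8"
    by (rule LIMSEQ_Suc)
  moreover have "\<forall>\<^sub>F d in sequentially. 3/16 \<le> FN x (necklace_start (Suc d)) (1/16)"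
    using in_L_FN_at_necklace_end[OF assms] by (auto simp: eventually_sequentially x_def)
  ultimately have "3/16 \<le> (1/8 :: real)"
    by (rule tendsto_lowerbound) simp
  then show False
    by simp
qed

end
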